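(* In the Rayleigh fading system model of the context with a single beam ($M=1$), if $\rho\le 1$ then the ergodic sum rate $R(\vec p)$ is a Schur-concave function of the feedback probabilities $\vec p\in[0,1]^n$. Consequently, a homogeneous threshold feedback policy solves the threshold selection problem: for every $\lambda\in(0,n]$ and every threshold vector $\vec\tau$ with $\sum_{i=1}^n \Pr\{\gamma_{i,1}\ge\tau_i\}\le\lambda$, there is a homogeneous threshold vector $\vec\tau'=(\tau,\dots,\tau)$ satisfying the same constraint with $R(\vec\tau')\ge R(\vec\tau)$.
   Context: System model: there are $n\ge 2$ users and $M\ge1$ beams. The SINR of user $i$ on beam $m$ is $\gamma_{i,m} = |X_{i,m}|^2 / \big(\tfrac1\rho + \sum_{k\ne m}|X_{i,k}|^2\big)$ with $\rho>0$, where (Rayleigh fading) the $X_{i,k}$ are i.i.d. unit-power circularly symmetric complex Gaussian; users are i.i.d., and the marginal distribution of each $\gamma_{i,m}$ is $F(x) = 1 - e^{-x/\rho}/(x+1)^{M-1}$, $x\ge0$, with density $f(x) = \frac{e^{-x/\rho}}{(x+1)^M}\big[\tfrac1\rho(x+1)+M-1\big]$. Each user $i$ has a threshold $\tau_i\in[0,\infty]$ and truncated SINR $\bar\gamma_{i,m}=\gamma_{i,m}\mathbf 1\{\gamma_{i,m}\ge\tau_i\}$. The ergodic sum rate is $R(\vec\tau) = \mathbb{E}\big[\sum_{m=1}^M\log(1+\max_{1\le i\le n}\bar\gamma_{i,m})\big]$. The feedback probability is $p_i = \Pr\{\gamma_{i,1}\ge\tau_i\}=1-F(\tau_i)$, and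 $R$ is regarded as a function $R(\vec p)$ via $\tau_i=F^{-1}(1-p_i)$ (with $F^{-1}(1)=+\infty$). A threshold vector is homogeneous if all thresholds are equal. Majorization: $\vec x$ majorizes $\vec y$ if the partial sums of the decreasingly ordered coordinates of $\vec x$ dominate those of $\vec y$ and the total sums are equal; $\varphi$ is Schur-concave if $\vec x$ majorizing $\vec y$ implies $\varphi(\vec x)\le\varphi(\vec y)$. *)

theory Defs
  imports "HOL-Probability.Probability"
begin

definition sinr_cdf :: "nat \<Rightarrow> real \<Rightarrow> real \<Rightarrow> real" where
  "sinr_cdf M \<rho> x = (if x < 0 then 0 else 1 - exp (- x / \<rho>) / (x + 1) ^ (M - 1))"

definition sinr_density :: "nat \<Rightarrow> real \<Rightarrow> real \<Rightarrow> real" where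
  "sinr_density M \<rho> x = (if x < 0 then 0 else
     exp (- x / \<rho>) / (x + 1) ^ M * ((1 / \<rho>) * (x + 1) + (real M - 1)))"

definition sinr_thr :: "nat \<Rightarrow> real \<Rightarrow> real \<Rightarrow> ereal" where
  "sinr_thr M \<rho> p = (if p = 0 then \<infinity>
     else ereal (THE x. 0 \<le> x \<and> sinr_cdf M \<rho> x = 1 - p))"

definition trunc_sinr :: "real \<Rightarrow> ereal \<Rightarrow> real" where
  "trunc_sinr g t = (if t \<le> ereal g then g else 0)"

definition sum_rate1 :: "'a measure \<Rightarrow> nat \<Rightarrow> (nat \<Rightarrow> 'a \<Rightarrow> real) \<Rightarrow> (nat \<Rightarrow> ereal) \<Rightarrow> real" where
  "sum_rate1 P n gam \<tau> =
     (\<integral>\<omega>. ln (1 + Max ((\<lambda>i. trunc_sinr (gam i \<omega>) (\<tau> i)) ` {..<n})) \<partial>P)"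

definition top_sum :: "nat \<Rightarrow> (nat \<Rightarrow> real) \<Rightarrow> nat \<Rightarrow> real" where
  "top_sum n x k = sum_list (take k (rev (sort (map x [0..<n]))))"

definition majorizes :: "nat \<Rightarrow> (nat \<Rightarrow> real) \<Rightarrow> (nat \<Rightarrow> real) \<Rightarrow> bool" where
  "majorizes n x y \<longleftrightarrow> (\<forall>k\<le>n. top_sum n y k \<le> top_sum n x k) \<and>
     (\<Sum>i<n. x i) = (\<Sum>i<n. y i)"

definition schur_concave_on :: "nat \<Rightarrow> (nat \<Rightarrow> real) set \<Rightarrow> ((nat \<Rightarrow> real) \<Rightarrow> real) \<Rightarrow> bool" where
  "schur_concave_on n D \<phi> \<longleftrightarrow>
     (\<forall>x\<in>D. \<forall>y\<in>D. majorizes n x y \<longrightarrow> \<phi> x \<le> \<phi> y)"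

end

theory Submission
  imports Defs
begin

text \<open>
  Single-beam Rayleigh fading: the SINR of each user is exponential with mean \<rho>, so a user with
  feedback probability p passes its SINR above t with probability min p (exp(-t/\<rho>)).

  Proof outline.
  (1) Layer cake: E ln(1 + max truncated SINR) = \<integral>_0^\<infinity> P(max > t) / (1+t) dt, and by independence
      P(max > t) = 1 - \<Prod>_i (1 - min (p_i) (exp(-t/\<rho>))).  Hence the sum rate is a functional
      rate_fun of the feedback probabilities alone (sum_rate_eq_rate_fun).
  (2) Two-user transfers: moving probability mass from a larger p_i to a smaller p_j does not
      decrease rate_fun when \<rho> \<le> 1 (rate_fun_transfer).  The change of the integrand factors as
      V(t) f(t), where V (the other users and the weight exp(t/\<rho>)/(1+t)) is nondecreasing
      exactly because \<rho> \<le> 1, and f changes sign once; a single-crossing inequality reduces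
      the claim to an explicit polynomial comparison (pair_moment_transfer).
  (3) Majorization is generated by such transfers (transfer_chain), so rate_fun is
      Schur-concave on [0,1]^n (rate_fun_schur_concave).
  (4) Every vector majorizes the constant vector with the same mean, and the common threshold
      realising that mean keeps the total feedback load; this gives the homogeneous policy.
\<close>

lemma exp_neg_div_tendsto_zero:
  fixes \<rho> :: real
  assumes "0 < \<rho>"
  shows "((\<lambda>t. exp (-t/\<rho>)) \<longlongrightarrow> 0) at_top"
proof -
  have "filterlim (\<lambda>t::real. (-1/\<rho>) * t) at_bot at_top"
    using assms by (intro filterlim_tendsto_neg_mult_at_bot[where c="-1/\<rho>"] filterlim_ident tendsto_const) auto
  then have "filterlim (\<lambda>t::real. -t/\<rho>) at_bot at_top" by simp
  then show ?thesis by (rule filterlim_compose[OF exp_at_bot])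
qed

lemma exponential_density_integrable:
  fixes \<rho> :: real
  assumes "0 < \<rho>"
  shows "set_integrable lborel {0<..} (\<lambda>t. exp (-t/\<rho>) / \<rho>)"
proof -
  have lim: "(((\<lambda>t. - exp (-t/\<rho>)) \<circ> real_of_ereal) \<longlongrightarrow> 0) (at_left \<infinity>)"
    unfolding ereal_tendsto_simps using tendsto_minus[OF exp_neg_div_tendsto_zero[OF assms]] by simp
  have "set_integrable lborel (einterval 0 \<infinity>) (\<lambda>t. exp (-t/\<rho>) / \<rho>)"
    using assms
    by (intro interval_integral_FTC_nonneg(1)[of 0 \<infinity> "\<lambda>t. - exp (-t/\<rho>)" _ "-1" 0] lim)
      (auto intro!: derivative_eq_intros tendsto_eq_intros simp: zero_ereal_def ereal_tendsto_simps)
  then show ?thesis by (simp add: zero_ereal_def)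
qed

text \<open>For a user with feedback probability x and exponential SINR, the event
  "truncated SINR \<le> t" has probability 1 - min x u with u = exp(-t/\<rho>).  The product of two such
  probabilities, and its integral against the exponential density, drive the two-user transfer
  argument below.\<close>

definition pair_stay :: "real \<Rightarrow> real \<Rightarrow> real \<Rightarrow> real" where
  "pair_stay x y u = (1 - min x u) * (1 - min y u)"

definition pair_moment :: "real \<Rightarrow> real \<Rightarrow> real" where
  "pair_moment x y = 1/3 + (1-x)^2 * (1-y) / 2 + (1-y)^3 / 6"

lemma continuous_interval_integrable:
  fixes f :: "real \<Rightarrow> real"
  assumes "continuous_on UNIV f"
  shows "interval_lebesgue_integrable lborel (ereal a) (ereal b) f"
  by (metis assms continuous_on_eq_continuous_within interval_integrable_isCont UNIV_I)

lemma interval_integral_concat: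
  fixes f :: "real \<Rightarrow> real"
  assumes "continuous_on UNIV f"
  shows "(LBINT v=ereal a..ereal b. f v) + (LBINT v=ereal b..ereal c. f v) = (LBINT v=ereal a..ereal c. f v)"
proof -
  have e: "min (ereal a) (min (ereal b) (ereal c)) = ereal (min a (min b c))"
          "max (ereal a) (max (ereal b) (ereal c)) = ereal (max a (max b c))"
    by (auto simp: min_def max_def)
  show ?thesis
    using continuous_interval_integrable[OF assms, of "min a (min b c)" "max a (max b c)"]
    by (intro interval_integral_sum) (simp only: e)
qed

lemma interval_integral_antiderivative:
  fixes f g :: "real \<Rightarrow> real"
  assumes "continuous_on UNIV f"
    and "\<And>v. min a b \<le> v \<Longrightarrow> v \<le> max a b \<Longrightarrow> (g has_real_derivative f v) (at v)"
  shows "(LBINT v=ereal a..ereal b. f v) = g b - g a"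
proof (rule interval_integral_FTC_finite)
  show "continuous_on {min a b..max a b} f"
    using assms(1) continuous_on_subset by blast
  show "(g has_vector_derivative f v) (at v within {min a b..max a b})"
    if "min a b \<le> v" "v \<le> max a b" for v
    using assms(2)[OF that] has_real_derivative_iff_has_vector_derivative has_vector_derivative_at_within
    by fastforce
qed

lemma pair_stay_integral_unit:
  assumes "0 \<le> y" "y \<le> x" "x \<le> 1"
  shows "(LBINT v=ereal 0..ereal 1. pair_stay x y (1 - v)) = pair_moment x y"
proof -
  define f where "f v = pair_stay x y (1 - v)" for v
  have cont: "continuous_on UNIV f" unfolding f_def pair_stay_def by (intro continuous_intros)
  have s1: "(LBINT v=ereal 0..ereal (1-x). f v) = (1-x)^2 * (1-y)"
  proof -
    have "((\<lambda>v. (1-x) * (1-y) * v) has_real_derivative f v) (at v)" if "0 \<le> v" "v \<le> 1 - x" for v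
      using that assms by (auto intro!: derivative_eq_intros simp: f_def pair_stay_def min_def)
    then show ?thesis
      using interval_integral_antiderivative[OF cont, where a=0 and b="1-x" and g="\<lambda>v. (1-x) * (1-y) * v"] assms
      by (auto simp: power2_eq_square)
  qed
  have s2: "(LBINT v=ereal (1-x)..ereal (1-y). f v) = (1-y)^3 / 2 - (1-x)^2 * (1-y) / 2"
  proof -
    have "((\<lambda>v. (1-y) * v^2 / 2) has_real_derivative f v) (at v)" if "1 - x \<le> v" "v \<le> 1 - y" for v
    proof -
      have "f v = (1-y) * v" using that assms by (auto simp: f_def pair_stay_def min_def)
      then show ?thesis by (auto intro!: derivative_eq_intros)
    qed
    then show ?thesis
      using interval_integral_antiderivative[OF cont, where a="1-x" and b="1-y" and g="\<lambda>v. (1-y) * v^2 / 2"] assms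
      by (auto simp: power2_eq_square power3_eq_cube mult_ac)
  qed
  have s3: "(LBINT v=ereal (1-y)..ereal 1. f v) = 1/3 - (1-y)^3/3"
  proof -
    have "((\<lambda>v. v^3 / 3) has_real_derivative f v) (at v)" if "1 - y \<le> v" "v \<le> 1" for v
    proof -
      have "min x (1 - v) = 1 - v" "min y (1 - v) = 1 - v" using that assms by auto
      then have "f v = v^2" by (simp add: f_def pair_stay_def power2_eq_square)
      then show ?thesis by (auto intro!: derivative_eq_intros simp: power2_eq_square)
    qed
    then show ?thesis
      using interval_integral_antiderivative[OF cont, where a="1-y" and b=1 and g="\<lambda>v. v^3 / 3"] assms
      by auto
  qed
  have "(LBINT v=ereal 0..ereal 1. f v)
      = (LBINT v=ereal 0..ereal (1-x). f v) + (LBINT v=ereal (1-x)..ereal (1-y). f v)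
        + (LBINT v=ereal (1-y)..ereal 1. f v)"
    using interval_integral_concat[OF cont] by simp
  also have "\<dots> = pair_moment x y"
    unfolding s1 s2 s3 pair_moment_def by linarith
  finally show ?thesis unfolding f_def .
qed

lemma pair_stay_bounds:
  assumes "0 \<le> x" "x \<le> 1" "0 \<le> y" "y \<le> 1" "0 \<le> u"
  shows "0 \<le> pair_stay x y u \<and> pair_stay x y u \<le> 1"
proof -
  have "0 \<le> 1 - min x u" "1 - min x u \<le> 1" "0 \<le> 1 - min y u" "1 - min y u \<le> 1"
    using assms by auto
  then show ?thesis unfolding pair_stay_def by (simp add: mult_le_one)
qed

lemma pair_stay_exponential_integrable:
  fixes \<rho> x y :: real
  assumes r: "0 < \<rho>" and xy: "0 \<le> x" "x \<le> 1" "0 \<le> y" "y \<le> 1"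
  shows "set_integrable lborel {0<..} (\<lambda>t. pair_stay x y (exp (-t/\<rho>)) * (exp (-t/\<rho>) / \<rho>))"
proof (rule set_integrable_bound[OF exponential_density_integrable[OF r]])
  show "set_borel_measurable lborel {0<..} (\<lambda>t. pair_stay x y (exp (-t/\<rho>)) * (exp (-t/\<rho>) / \<rho>))"
    unfolding set_borel_measurable_def pair_stay_def by measurable
  show "AE t in lborel. t \<in> {0<..} \<longrightarrow>
      norm (pair_stay x y (exp (-t/\<rho>)) * (exp (-t/\<rho>) / \<rho>)) \<le> norm (exp (-t/\<rho>) / \<rho>)"
  proof (intro AE_I2 impI)
    fix t :: real
    have "0 \<le> pair_stay x y (exp (-t/\<rho>))" "pair_stay x y (exp (-t/\<rho>)) \<le> 1"
      using pair_stay_bounds[OF xy, of "exp (-t/\<rho>)"] by auto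
    moreover have "0 \<le> exp (-t/\<rho>) / \<rho>" using r by simp
    ultimately show "norm (pair_stay x y (exp (-t/\<rho>)) * (exp (-t/\<rho>) / \<rho>)) \<le> norm (exp (-t/\<rho>) / \<rho>)"
      unfolding real_norm_def by (metis abs_of_nonneg mult_left_le_one_le zero_le_mult_iff)
  qed
qed

text \<open>Substituting v = 1 - exp(-t/\<rho>) turns the unit-interval integral into an integral against
  the exponential density.\<close>

lemma pair_stay_exponential_integral:
  fixes \<rho> x y :: real
  assumes r: "0 < \<rho>" and xy: "0 \<le> y" "y \<le> x" "x \<le> 1"
  shows "(LINT t:{0<..}|lborel. pair_stay x y (exp (-t/\<rho>)) * (exp (-t/\<rho>) / \<rho>)) = pair_moment x y"
proof -
  define f where "f s = pair_stay x y (1 - s)" for s :: real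
  define g where "g t = 1 - exp (-t/\<rho>)" for t :: real
  define g' where "g' t = exp (-t/\<rho>) / \<rho>" for t :: real
  have fg: "(\<lambda>t. pair_stay x y (exp (-t/\<rho>)) * (exp (-t/\<rho>) / \<rho>)) = (\<lambda>t. f (g t) * g' t)"
    by (simp add: f_def g_def g'_def)
  have einterval_pos: "einterval 0 \<infinity> = {0::real<..}"
    by (auto simp: einterval_def)
  have substitution: "(LBINT s=0..1. f s) = (LBINT t=0..\<infinity>. f (g t) * g' t)"
  proof (rule interval_integral_substitution_nonneg(2))
    show "((ereal \<circ> g \<circ> real_of_ereal) \<longlongrightarrow> 1) (at_left \<infinity>)"
    proof -
      have "(g \<longlongrightarrow> 1) at_top"
        unfolding g_def using tendsto_diff[OF tendsto_const[of 1] exp_neg_div_tendsto_zero[OF r]] by simp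
      then have "((ereal \<circ> g) \<longlongrightarrow> ereal 1) at_top" unfolding ereal_tendsto_simps2(1) .
      then show ?thesis unfolding ereal_tendsto_simps1(3) by (simp add: one_ereal_def)
    qed
    show "set_integrable lborel (einterval 0 \<infinity>) (\<lambda>t. f (g t) * g' t)"
    proof -
      have "0 \<le> x" "y \<le> 1" using xy by auto
      from pair_stay_exponential_integrable[OF r this(1) xy(3) xy(1) this(2)]
      show ?thesis unfolding fg einterval_pos .
    qed
    show "\<And>t. 0 < ereal t \<Longrightarrow> ereal t < \<infinity> \<Longrightarrow> (g has_real_derivative g' t) (at t)"
      using r unfolding g_def g'_def by (auto intro!: derivative_eq_intros)
    show "\<And>t. 0 < ereal t \<Longrightarrow> ereal t < \<infinity> \<Longrightarrow> isCont f (g t)"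
      unfolding f_def pair_stay_def by (intro continuous_intros)
    show "\<And>t. 0 < ereal t \<Longrightarrow> ereal t < \<infinity> \<Longrightarrow> isCont g' t"
      using r unfolding g'_def by (intro continuous_intros) auto
    show "\<And>t. 0 < ereal t \<Longrightarrow> ereal t < \<infinity> \<Longrightarrow> 0 \<le> f (g t)"
      using pair_stay_bounds xy unfolding f_def g_def by simp
    show "\<And>t. 0 \<le> ereal t \<Longrightarrow> ereal t \<le> \<infinity> \<Longrightarrow> 0 \<le> g' t"
      using r unfolding g'_def by simp
    show "((ereal \<circ> g \<circ> real_of_ereal) \<longlongrightarrow> 0) (at_right 0)"
      using r unfolding g_def by (auto intro!: tendsto_eq_intros simp: zero_ereal_def ereal_tendsto_simps)
  qed simp
  have "(LINT t:{0<..}|lborel. f (g t) * g' t) = (LBINT t=0..\<infinity>. f (g t) * g' t)"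
    by (simp add: interval_lebesgue_integral_def einterval_pos)
  also have "\<dots> = (LBINT s=0..1. f s)"
    by (rule substitution[symmetric])
  also have "\<dots> = pair_moment x y"
    unfolding f_def zero_ereal_def one_ereal_def by (rule pair_stay_integral_unit[OF xy])
  finally show ?thesis unfolding fg .
qed

text \<open>For feedback probabilities p, exceed_fun n \<rho> p t is the probability
  that the largest truncated SINR exceeds t > 0, and rate_fun integrates it against 1/(1+t);
  by the layer-cake formula this is the ergodic sum rate (lemma sum_rate_eq_rate_fun below).\<close>

definition exceed_fun :: "nat \<Rightarrow> real \<Rightarrow> (nat \<Rightarrow> real) \<Rightarrow> real \<Rightarrow> real" where
  "exceed_fun n \<rho> p t = 1 - (\<Prod>i<n. 1 - min (p i) (exp (-t/\<rho>)))"

definition rate_fun :: "nat \<Rightarrow> real \<Rightarrow> (nat \<Rightarrow> real) \<Rightarrow> real" where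
  "rate_fun n \<rho> p = (LINT t:{0<..}|lborel. exceed_fun n \<rho> p t / (1 + t))"

lemma prod_one_minus_bounds:
  fixes m :: "'i \<Rightarrow> real"
  assumes "finite I" "\<And>i. i \<in> I \<Longrightarrow> 0 \<le> m i \<and> m i \<le> 1"
  shows "0 \<le> (\<Prod>i\<in>I. 1 - m i) \<and> (\<Prod>i\<in>I. 1 - m i) \<le> 1 \<and> 1 - (\<Sum>i\<in>I. m i) \<le> (\<Prod>i\<in>I. 1 - m i)"
  using assms
proof (induction I rule: finite_induct)
  case (insert k I)
  then have IH: "0 \<le> (\<Prod>i\<in>I. 1 - m i)" "(\<Prod>i\<in>I. 1 - m i) \<le> 1" "1 - (\<Sum>i\<in>I. m i) \<le> (\<Prod>i\<in>I. 1 - m i)"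
    and mk: "0 \<le> m k" "m k \<le> 1"
    by auto
  have "(1 - m k) * (\<Prod>i\<in>I. 1 - m i) \<ge> (\<Prod>i\<in>I. 1 - m i) - m k"
    using IH mk by (simp add: algebra_simps mult_left_le)
  moreover have "0 \<le> (1 - m k) * (\<Prod>i\<in>I. 1 - m i)" "(1 - m k) * (\<Prod>i\<in>I. 1 - m i) \<le> 1"
    using IH mk by (simp_all add: mult_le_one)
  ultimately show ?case using insert IH by simp
qed simp

lemma exceed_fun_bounds:
  assumes "\<forall>i<n. 0 \<le> p i \<and> p i \<le> 1"
  shows "0 \<le> exceed_fun n \<rho> p t \<and> exceed_fun n \<rho> p t \<le> 1 \<and> exceed_fun n \<rho> p t \<le> real n * exp (-t/\<rho>)"
proof -
  have "(\<Sum>i<n. min (p i) (exp (-t/\<rho>))) \<le> (\<Sum>i<n. exp (-t/\<rho>))"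
    by (intro sum_mono) auto
  moreover have "0 \<le> (\<Prod>i<n. 1 - min (p i) (exp (-t/\<rho>))) \<and> (\<Prod>i<n. 1 - min (p i) (exp (-t/\<rho>))) \<le> 1 \<and>
     1 - (\<Sum>i<n. min (p i) (exp (-t/\<rho>))) \<le> (\<Prod>i<n. 1 - min (p i) (exp (-t/\<rho>)))"
    using assms by (intro prod_one_minus_bounds) auto
  ultimately show ?thesis unfolding exceed_fun_def by auto
qed

text \<open>The integrand of rate_fun is dominated by n times the exponential density.\<close>

lemma rate_integrand_integrable:
  fixes \<rho> :: real
  assumes r: "0 < \<rho>" and box: "\<forall>i<n. 0 \<le> p i \<and> p i \<le> 1"
  shows "set_integrable lborel {0<..} (\<lambda>t. exceed_fun n \<rho> p t / (1 + t))"
proof (rule set_integrable_bound[OF set_integrable_mult_right[OF exponential_density_integrable[OF r], of "real n * \<rho>"]])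
  show "set_borel_measurable lborel {0<..} (\<lambda>t. exceed_fun n \<rho> p t / (1 + t))"
    unfolding set_borel_measurable_def exceed_fun_def by measurable
  have "norm (exceed_fun n \<rho> p t / (1 + t)) \<le> norm (real n * \<rho> * (exp (-t/\<rho>) / \<rho>))" if "0 < t" for t
  proof -
    have g: "0 \<le> exceed_fun n \<rho> p t" "exceed_fun n \<rho> p t \<le> real n * exp (-t/\<rho>)"
      using exceed_fun_bounds[OF box] by auto
    have "exceed_fun n \<rho> p t / (1 + t) \<le> exceed_fun n \<rho> p t"
      using g that by (simp add: divide_le_eq mult_le_cancel_left1)
    then show ?thesis using g that r by simp
  qed
  then show "AE t in lborel. t \<in> {0<..} \<longrightarrow>
      norm (exceed_fun n \<rho> p t / (1 + t)) \<le> norm (real n * \<rho> * (exp (-t/\<rho>) / \<rho>))"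
    by auto
qed

lemma rate_fun_cong:
  assumes "\<forall>k<n. x k = y k"
  shows "rate_fun n \<rho> x = rate_fun n \<rho> y"
proof -
  have "exceed_fun n \<rho> x = exceed_fun n \<rho> y"
    unfolding exceed_fun_def using assms by (intro ext arg_cong2[where f="(-)"] prod.cong) auto
  then show ?thesis unfolding rate_fun_def by simp
qed

lemma rate_fun_mset:
  assumes "mset (map x [0..<n]) = mset (map y [0..<n])"
  shows "rate_fun n \<rho> x = rate_fun n \<rho> y"
proof -
  have prod_mset: "(\<Prod>i<n. h (z i)) = prod_mset (image_mset h (mset (map z [0..<n])))"
    for h :: "real \<Rightarrow> real" and z :: "nat \<Rightarrow> real"
    by (simp add: prod_unfold_prod_mset mset_set_upto_eq_mset_upto image_mset.compositionality comp_def)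
  have "exceed_fun n \<rho> x = exceed_fun n \<rho> y" unfolding exceed_fun_def
    by (rule ext) (subst (1 2) prod_mset, simp only: assms)
  then show ?thesis unfolding rate_fun_def by simp
qed

lemma pair_stay_transfer_small_u:
  fixes \<alpha> \<beta> a b u :: real
  assumes h: "0 \<le> \<beta>" "\<beta> \<le> b" "b \<le> a" "a \<le> \<alpha>" "\<alpha> \<le> 1" "0 \<le> u"
    and cross: "(1-a) * (1-b) \<le> (1-u) * (1-\<beta>)"
  shows "pair_stay a b u \<le> pair_stay \<alpha> \<beta> u"
proof -
  consider "u \<le> \<beta>" | "\<beta> \<le> u" "u \<le> b" | "b \<le> u" "u \<le> a" | "a \<le> u" "u \<le> \<alpha>" | "\<alpha> \<le> u"
    by linarith
  then show ?thesis
  proof cases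
    case 2
    then have "min \<alpha> u = u" "min \<beta> u = \<beta>" "min a u = u" "min b u = u" using h by auto
    moreover have "(1-u) * (1-u) \<le> (1-u) * (1-\<beta>)" using 2 h by (intro mult_left_mono) auto
    ultimately show ?thesis by (simp add: pair_stay_def)
  next
    case 3
    then have "min \<alpha> u = u" "min \<beta> u = \<beta>" "min a u = u" "min b u = b" using h by auto
    moreover have "(1-u) * (1-b) \<le> (1-u) * (1-\<beta>)" using 3 h by (intro mult_left_mono) auto
    ultimately show ?thesis by (simp add: pair_stay_def)
  next
    case 4
    then have "min \<alpha> u = u" "min \<beta> u = \<beta>" "min a u = a" "min b u = b" using h by auto
    then show ?thesis using cross by (simp add: pair_stay_def)
  next
    case 5
    then have "min \<alpha> u = \<alpha>" "min \<beta> u = \<beta>" "min a u = a" "min b u = b" using h by auto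
    moreover have "(1-u) * (1-\<beta>) \<le> (1-\<alpha>) * (1-\<beta>)" using 5 h by (intro mult_right_mono) auto
    ultimately show ?thesis using cross by (simp add: pair_stay_def)
  next
    case 1
    then have "min \<alpha> u = u" "min \<beta> u = u" "min a u = u" "min b u = u" using h by auto
    then show ?thesis by (simp add: pair_stay_def)
  qed
qed

lemma pair_stay_transfer_large_u:
  fixes \<alpha> \<beta> a b u :: real
  assumes h: "0 \<le> \<beta>" "\<beta> \<le> b" "b \<le> a" "a \<le> \<alpha>" "\<alpha> \<le> 1" "a + b = \<alpha> + \<beta>" "u \<le> 1"
    and cross: "(1-u) * (1-\<beta>) \<le> (1-a) * (1-b)"
  shows "pair_stay \<alpha> \<beta> u \<le> pair_stay a b u"
proof -
  consider "u \<le> \<beta>" | "\<beta> \<le> u" "u \<le> b" | "b \<le> u" "u \<le> a" | "a \<le> u" "u \<le> \<alpha>" | "\<alpha> \<le> u"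
    by linarith
  then show ?thesis
  proof cases
    case 2
    then have "min \<alpha> u = u" "min \<beta> u = \<beta>" "min a u = u" "min b u = u" using h by auto
    moreover have "(1-a) * (1-b) \<le> (1-u) * (1-u)" using 2 h by (intro mult_mono) auto
    ultimately show ?thesis using cross by (simp add: pair_stay_def)
  next
    case 3
    then have "min \<alpha> u = u" "min \<beta> u = \<beta>" "min a u = u" "min b u = b" using h by auto
    moreover have "(1-a) * (1-b) \<le> (1-u) * (1-b)" using 3 h by (intro mult_right_mono) auto
    ultimately show ?thesis using cross by (simp add: pair_stay_def)
  next
    case 4
    then have "min \<alpha> u = u" "min \<beta> u = \<beta>" "min a u = a" "min b u = b" using h by auto
    then show ?thesis using cross by (simp add: pair_stay_def)
  next
    case 5
    text \<open>Here all minima are attained at the probabilities, and the claim is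
      (1-\<alpha>)(1-\<beta>) \<le> (1-a)(1-b), which holds as the sum a + b is fixed.\<close>
    have "(1-a) * (1-b) - (1-\<alpha>) * (1-\<beta>) = (\<alpha>-a) * (\<alpha>-b)"
    proof -
      have "\<beta> = a + b - \<alpha>" using h(6) by simp
      then show ?thesis unfolding \<open>\<beta> = a + b - \<alpha>\<close> by (simp add: algebra_simps)
    qed
    moreover have "0 \<le> (\<alpha>-a) * (\<alpha>-b)" using h by simp
    moreover have "min \<alpha> u = \<alpha>" "min \<beta> u = \<beta>" "min a u = a" "min b u = b" using 5 h by auto
    ultimately show ?thesis by (simp add: pair_stay_def)
  next
    case 1
    then have "min \<alpha> u = u" "min \<beta> u = u" "min a u = u" "min b u = u" using h by auto
    then show ?thesis by (simp add: pair_stay_def)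
  qed
qed

lemma pair_stay_single_crossing:
  fixes \<alpha> \<beta> a b :: real
  assumes h: "0 \<le> \<beta>" "\<beta> \<le> b" "b \<le> a" "a < \<alpha>" "\<alpha> \<le> 1" "a + b = \<alpha> + \<beta>"
  obtains u0 where "0 < u0" "u0 \<le> 1"
    "\<And>u. 0 \<le> u \<Longrightarrow> u \<le> u0 \<Longrightarrow> pair_stay a b u \<le> pair_stay \<alpha> \<beta> u"
    "\<And>u. u0 \<le> u \<Longrightarrow> u \<le> 1 \<Longrightarrow> pair_stay \<alpha> \<beta> u \<le> pair_stay a b u"
proof
  define u0 where "u0 = 1 - (1-a) * (1-b) / (1-\<beta>)"
  have b1: "\<beta> < 1" using h by linarith
  have "(1-a) * (1-b) \<le> (1-a) * (1-\<beta>)" using h by (intro mult_left_mono) auto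
  then have "(1-a) * (1-b) / (1-\<beta>) \<le> 1 - a" using b1 by (simp add: divide_le_eq)
  then show "0 < u0" unfolding u0_def using h by linarith
  show "u0 \<le> 1" unfolding u0_def using h b1 by (simp add: divide_nonneg_pos)
  show "pair_stay a b u \<le> pair_stay \<alpha> \<beta> u" if "0 \<le> u" "u \<le> u0" for u
  proof (rule pair_stay_transfer_small_u)
    have "(1-a) * (1-b) / (1-\<beta>) \<le> 1 - u" using that unfolding u0_def by linarith
    then show "(1-a) * (1-b) \<le> (1-u) * (1-\<beta>)" using b1 by (simp add: divide_le_eq)
  qed (use h that in auto)
  show "pair_stay \<alpha> \<beta> u \<le> pair_stay a b u" if "u0 \<le> u" "u \<le> 1" for u
  proof (rule pair_stay_transfer_large_u)
    have "1 - u \<le> (1-a) * (1-b) / (1-\<beta>)" using that unfolding u0_def by linarith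
    then show "(1-u) * (1-\<beta>) \<le> (1-a) * (1-b)" using b1 by (simp add: le_divide_eq)
  qed (use h that in auto)
qed

lemma pair_moment_transfer:
  fixes \<alpha> \<beta> a b :: real
  assumes h: "\<beta> \<le> b" "b \<le> a" "a \<le> \<alpha>" "a + b = \<alpha> + \<beta>"
  shows "pair_moment a b \<le> pair_moment \<alpha> \<beta>"
proof -
  have identity: "pair_moment x y = 1/3 + 2/3 * (((2 - x - y) / 2)^3 + ((x - y) / 2)^3)" for x y
    unfolding pair_moment_def
    by (simp add: power2_eq_square power3_eq_cube field_simps; simp add: algebra_simps)
  have spread: "((a - b) / 2)^3 \<le> ((\<alpha> - \<beta>) / 2)^3" using h by (intro power_mono) auto
  have centre: "2 - \<alpha> - \<beta> = 2 - a - b" using h(4) by simp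
  show ?thesis unfolding identity[of a b] identity[of \<alpha> \<beta>] centre
    using spread by (intro add_left_mono mult_left_mono) auto
qed

text \<open>For \<rho> \<le> 1 the weight exp(t/\<rho>)/(1+t) is nondecreasing on [0, \<infinity>); this is where the
  hypothesis \<rho> \<le> 1 of the theorem enters.\<close>

lemma exp_over_one_plus_mono:
  fixes \<rho> s t :: real
  assumes r: "0 < \<rho>" "\<rho> \<le> 1" and st: "0 \<le> s" "s \<le> t"
  shows "exp (s/\<rho>) / (1+s) \<le> exp (t/\<rho>) / (1+t)"
proof -
  have e: "exp (t/\<rho>) = exp (s/\<rho>) * exp ((t-s)/\<rho>)" by (simp add: exp_add[symmetric] diff_divide_distrib)
  have "t - s \<le> (t-s)/\<rho>" using r st by (simp add: le_divide_eq mult_left_le)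
  then have "1 + (t - s) \<le> exp ((t-s)/\<rho>)" using exp_ge_add_one_self[of "(t-s)/\<rho>"] by linarith
  then have "exp (s/\<rho>) * (1 + (t-s)) * (1+s) \<le> exp (t/\<rho>) * (1+s)"
    unfolding e using st by (intro mult_right_mono) auto
  moreover have "1 + t \<le> (1 + (t-s)) * (1+s)"
    using st mult_left_mono[of s t s] by (simp add: algebra_simps)
  then have "exp (s/\<rho>) * (1+t) \<le> exp (s/\<rho>) * (1 + (t-s)) * (1+s)"
    by (simp add: mult.assoc)
  ultimately have "exp (s/\<rho>) * (1+t) \<le> exp (t/\<rho>) * (1+s)" by linarith
  then show ?thesis using st by (simp add: divide_simps)
qed

lemma single_crossing_set_integral:
  fixes V f :: "real \<Rightarrow> real" and M :: "real measure"
  assumes "set_integrable M S f" "set_integrable M S (\<lambda>t. V t * f t)"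
    and "\<And>t. t \<in> S \<Longrightarrow> t < t0 \<Longrightarrow> f t \<le> 0 \<and> V t \<le> V t0"
    and "\<And>t. t \<in> S \<Longrightarrow> t0 \<le> t \<Longrightarrow> 0 \<le> f t \<and> V t0 \<le> V t"
  shows "V t0 * (LINT t:S|M. f t) \<le> (LINT t:S|M. V t * f t)"
proof -
  have "V t0 * f t \<le> V t * f t" if "t \<in> S" for t
  proof (cases "t < t0")
    case True then show ?thesis using assms(3)[OF that] by (simp add: mult_right_mono_neg)
  next
    case False then show ?thesis using assms(4)[OF that] by (simp add: mult_right_mono)
  qed
  then have "(LINT t:S|M. V t0 * f t) \<le> (LINT t:S|M. V t * f t)"
    using assms(1,2) by (intro set_integral_mono set_integrable_mult_right) auto
  then show ?thesis using assms(1) by simp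
qed

lemma exceed_fun_pair_split:
  assumes "i < n" "j < n" "i \<noteq> j"
  shows "exceed_fun n \<rho> p t = 1 - pair_stay (p i) (p j) (exp (-t/\<rho>)) *
           (\<Prod>k\<in>{..<n}-{i,j}. 1 - min (p k) (exp (-t/\<rho>)))"
proof -
  have "{..<n} - {i} - {j} = {..<n} - {i,j}" by auto
  then show ?thesis
    using assms unfolding exceed_fun_def pair_stay_def
    by (simp add: prod.remove[of "{..<n}" i] prod.remove[of "{..<n} - {i}" j] mult.assoc)
qed

definition transfer_weight :: "nat \<Rightarrow> real \<Rightarrow> (nat \<Rightarrow> real) \<Rightarrow> nat \<Rightarrow> nat \<Rightarrow> real \<Rightarrow> real" where
  "transfer_weight n \<rho> p i j t =
     \<rho> * (\<Prod>k\<in>{..<n}-{i,j}. 1 - min (p k) (exp (-t/\<rho>))) * (exp (t/\<rho>) / (1+t))"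

lemma transfer_weight_mono:
  fixes \<rho> s t :: real
  assumes r: "0 < \<rho>" "\<rho> \<le> 1" and box: "\<forall>k<n. 0 \<le> p k \<and> p k \<le> 1" and st: "0 \<le> s" "s \<le> t"
  shows "0 \<le> transfer_weight n \<rho> p i j s" and "transfer_weight n \<rho> p i j s \<le> transfer_weight n \<rho> p i j t"
proof -
  define C where "C t = (\<Prod>k\<in>{..<n}-{i,j}. 1 - min (p k) (exp (-t/\<rho>)))" for t
  have C_nonneg: "0 \<le> C t" for t
    unfolding C_def using box by (intro prod_nonneg) auto
  have e_le: "exp (-t/\<rho>) \<le> exp (-s/\<rho>)" using st r by (simp add: divide_right_mono)
  have "min (p k) (exp (-t/\<rho>)) \<le> min (p k) (exp (-s/\<rho>))" for k
    using e_le by (rule min.mono[OF order_refl])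
  then have "C s \<le> C t"
    unfolding C_def using box by (intro prod_mono) (auto simp del: exp_le_cancel_iff)
  then show "transfer_weight n \<rho> p i j s \<le> transfer_weight n \<rho> p i j t"
    unfolding transfer_weight_def C_def[symmetric]
    using exp_over_one_plus_mono[OF r st] C_nonneg st r by (intro mult_mono) auto
  show "0 \<le> transfer_weight n \<rho> p i j s"
    unfolding transfer_weight_def C_def[symmetric] using C_nonneg st r by simp
qed

lemma rate_integrand_transfer:
  fixes \<rho> t :: real
  assumes r: "0 < \<rho>" and ij: "i < n" "j < n" "i \<noteq> j"
  defines "e \<equiv> exp (-t/\<rho>)"
  shows "exceed_fun n \<rho> (p(i:=a, j:=b)) t / (1+t) - exceed_fun n \<rho> p t / (1+t)
       = transfer_weight n \<rho> p i j t * ((pair_stay (p i) (p j) e - pair_stay a b e) * (e / \<rho>))"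
proof -
  define C where "C = (\<Prod>k\<in>{..<n}-{i,j}. 1 - min (p k) e)"
  have "(\<Prod>k\<in>{..<n}-{i,j}. 1 - min ((p(i:=a, j:=b)) k) e) = C"
    unfolding C_def by (intro prod.cong) auto
  then have G: "exceed_fun n \<rho> (p(i:=a, j:=b)) t - exceed_fun n \<rho> p t
      = C * (pair_stay (p i) (p j) e - pair_stay a b e)"
    using exceed_fun_pair_split[OF ij, of \<rho> p t] exceed_fun_pair_split[OF ij, of \<rho> "p(i:=a, j:=b)" t] ij
    unfolding C_def e_def by (simp add: algebra_simps)
  have "exp (t/\<rho>) * e = 1" unfolding e_def by (simp add: exp_minus_inverse[symmetric] exp_add[symmetric])
  then have "transfer_weight n \<rho> p i j t * ((pair_stay (p i) (p j) e - pair_stay a b e) * (e / \<rho>))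
      = (\<rho> * inverse \<rho>) * (exp (t/\<rho>) * e) * (C * (pair_stay (p i) (p j) e - pair_stay a b e)) * inverse (1+t)"
    unfolding transfer_weight_def C_def e_def by (simp add: divide_inverse mult_ac)
  also have "\<dots> = (exceed_fun n \<rho> (p(i:=a, j:=b)) t - exceed_fun n \<rho> p t) * inverse (1+t)"
    using r \<open>exp (t/\<rho>) * e = 1\<close> G by simp
  finally show ?thesis by (simp add: divide_inverse left_diff_distrib)
qed

text \<open>The main analytic step: a transfer between two users that moves their feedback
  probabilities closer together does not decrease rate_fun, provided \<rho> \<le> 1.  The change of the
  integrand is V(t) f(t) with V the transfer weight (nondecreasing) and f changing sign once at
  t0; the single-crossing inequality reduces the claim to pair_moment_transfer.\<close>

lemma rate_fun_transfer:
  fixes \<rho> :: real and p :: "nat \<Rightarrow> real"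
  assumes r: "0 < \<rho>" "\<rho> \<le> 1" and box: "\<forall>k<n. 0 \<le> p k \<and> p k \<le> 1"
    and ij: "i < n" "j < n" "i \<noteq> j"
    and ab: "a + b = p i + p j" "p j \<le> b" "b \<le> a" "a \<le> p i"
  shows "rate_fun n \<rho> p \<le> rate_fun n \<rho> (p(i:=a, j:=b))"
proof (cases "a = p i")
  case True
  then have "p(i:=a, j:=b) = p" using ab by auto
  then show ?thesis by simp
next
  case False
  define \<alpha> \<beta> p' where "\<alpha> = p i" and "\<beta> = p j" and "p' = p(i:=a, j:=b)"
  have hb: "0 \<le> \<beta>" "\<beta> \<le> b" "b \<le> a" "a < \<alpha>" "\<alpha> \<le> 1" "a + b = \<alpha> + \<beta>"
    using box ij ab False unfolding \<alpha>_def \<beta>_def by auto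
  have box': "\<forall>k<n. 0 \<le> p' k \<and> p' k \<le> 1" using box hb unfolding p'_def by auto
  obtain u0 where u0: "0 < u0" "u0 \<le> 1"
    and below: "\<And>u. 0 \<le> u \<Longrightarrow> u \<le> u0 \<Longrightarrow> pair_stay a b u \<le> pair_stay \<alpha> \<beta> u"
    and above: "\<And>u. u0 \<le> u \<Longrightarrow> u \<le> 1 \<Longrightarrow> pair_stay \<alpha> \<beta> u \<le> pair_stay a b u"
    using pair_stay_single_crossing[OF hb] by blast
  define V where "V = transfer_weight n \<rho> p i j"
  define f where "f t = (pair_stay \<alpha> \<beta> (exp (-t/\<rho>)) - pair_stay a b (exp (-t/\<rho>))) * (exp (-t/\<rho>) / \<rho>)" for t
  define t0 where "t0 = - \<rho> * ln u0"
  have t0: "0 \<le> t0" "exp (-t0/\<rho>) = u0"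
    using u0 r unfolding t0_def by (auto simp: mult_le_0_iff)
  have e_cross: "u0 \<le> exp (-t/\<rho>) \<longleftrightarrow> t \<le> t0" for t
    using r by (simp flip: t0(2) add: divide_le_cancel)
  have V_mono: "V s \<le> V t" if "0 \<le> s" "s \<le> t" for s t
    unfolding V_def using transfer_weight_mono(2)[OF r box that] .
  have diff: "exceed_fun n \<rho> p' t / (1+t) - exceed_fun n \<rho> p t / (1+t) = V t * f t" for t
    unfolding V_def f_def p'_def \<alpha>_def \<beta>_def using rate_integrand_transfer[OF r(1) ij] .
  have f_sign: "f t \<le> 0 \<and> V t \<le> V t0" if "t \<in> {0<..}" "t < t0" for t
  proof -
    have "pair_stay \<alpha> \<beta> (exp (-t/\<rho>)) - pair_stay a b (exp (-t/\<rho>)) \<le> 0"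
      using above e_cross[of t] that r by auto
    moreover have "0 \<le> exp (-t/\<rho>) / \<rho>" using r by simp
    ultimately have "f t \<le> 0" unfolding f_def by (rule mult_nonpos_nonneg)
    then show ?thesis using V_mono[of t t0] that by auto
  qed
  have f_sign': "0 \<le> f t \<and> V t0 \<le> V t" if "t \<in> {0<..}" "t0 \<le> t" for t
  proof -
    have "exp (-t/\<rho>) \<le> exp (-t0/\<rho>)" using that r by (simp add: divide_right_mono)
    then have "exp (-t/\<rho>) \<le> u0" unfolding t0(2) .
    moreover have "exp (-t/\<rho>) \<le> 1" using that r by simp
    ultimately show ?thesis using below[of "exp (-t/\<rho>)"] V_mono[OF t0(1) that(2)] r
      by (auto simp: f_def)
  qed
  have pair: "set_integrable lborel {0<..} (\<lambda>t. pair_stay x y (exp (-t/\<rho>)) * (exp (-t/\<rho>) / \<rho>))"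
    "(LINT t:{0<..}|lborel. pair_stay x y (exp (-t/\<rho>)) * (exp (-t/\<rho>) / \<rho>)) = pair_moment x y"
    if "0 \<le> y" "y \<le> x" "x \<le> 1" for x y
    using pair_stay_exponential_integrable[OF r(1)] pair_stay_exponential_integral[OF r(1) that] that
    by auto
  have f_int: "set_integrable lborel {0<..} f"
    and f_integral: "(LINT t:{0<..}|lborel. f t) = pair_moment \<alpha> \<beta> - pair_moment a b"
    using pair[of \<beta> \<alpha>] pair[of b a] hb unfolding f_def left_diff_distrib by auto
  have Vf_int: "set_integrable lborel {0<..} (\<lambda>t. V t * f t)"
    using rate_integrand_integrable[OF r(1) box'] rate_integrand_integrable[OF r(1) box]
    unfolding diff[symmetric] by (rule set_integral_diff(1))
  have "V t0 * (pair_moment \<alpha> \<beta> - pair_moment a b) \<le> (LINT t:{0<..}|lborel. V t * f t)"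
    using single_crossing_set_integral[OF f_int Vf_int f_sign f_sign'] f_integral by simp
  also have "\<dots> = rate_fun n \<rho> p' - rate_fun n \<rho> p"
    using rate_integrand_integrable[OF r(1) box] rate_integrand_integrable[OF r(1) box']
    unfolding rate_fun_def diff[symmetric] by simp
  finally have "V t0 * (pair_moment \<alpha> \<beta> - pair_moment a b) \<le> rate_fun n \<rho> p' - rate_fun n \<rho> p" .
  moreover have "0 \<le> V t0 * (pair_moment \<alpha> \<beta> - pair_moment a b)"
    using transfer_weight_mono(1)[OF r box t0(1) order_refl] pair_moment_transfer[of \<beta> b a \<alpha>] hb
    unfolding V_def by (intro mult_nonneg_nonneg) auto
  ultimately show ?thesis unfolding p'_def by linarith
qed

text \<open>If X majorizes a
  nonincreasing Y in the prefix-sum sense, then X is carried to Y by finitely many transfers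
  between two coordinates that move them closer together.  Each transfer picks the last index j
  where X exceeds Y and the first later index k where X falls below Y.\<close>

lemma crossing_indices:
  fixes X Y :: "nat \<Rightarrow> real"
  assumes pre: "\<forall>m\<le>n. (\<Sum>i<m. Y i) \<le> (\<Sum>i<m. X i)" and tot: "(\<Sum>i<n. X i) = (\<Sum>i<n. Y i)"
    and differ: "\<exists>k<n. X k \<noteq> Y k"
  obtains j k where "j < k" "k < n" "Y j < X j" "X k < Y k"
    "\<And>i. j < i \<Longrightarrow> i < k \<Longrightarrow> X i = Y i"
    "\<And>m. j < m \<Longrightarrow> m \<le> k \<Longrightarrow> X j - Y j \<le> (\<Sum>i<m. X i) - (\<Sum>i<m. Y i)"
proof -
  have split: "(\<Sum>i<m. f i) = (\<Sum>i<Suc j. f i) + (\<Sum>i\<in>{Suc j..<m}. f i)"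
    if "j < m" for f :: "nat \<Rightarrow> real" and j m
    using sum.atLeastLessThan_concat[of 0 "Suc j" m f] that by (simp add: atLeast0LessThan)
  define J where "J = {k. k < n \<and> Y k < X k}"
  have "J \<noteq> {}"
  proof
    assume "J = {}"
    then have "\<forall>k\<in>{..<n}. X k \<le> Y k" unfolding J_def by force
    moreover from this differ have "\<exists>k\<in>{..<n}. X k < Y k" by force
    ultimately have "(\<Sum>i<n. X i) < (\<Sum>i<n. Y i)" by (intro sum_strict_mono_ex1) auto
    then show False using tot by simp
  qed
  define j where "j = Max J"
  have j: "j < n" "Y j < X j" and j_last: "\<And>i. i < n \<Longrightarrow> Y i < X i \<Longrightarrow> i \<le> j"
    using Max_in[of J] \<open>J \<noteq> {}\<close> unfolding j_def J_def by auto
  have gap: "X j - Y j \<le> (\<Sum>i<Suc j. X i - Y i)"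
    using pre j by (simp add: sum_subtractf)
  define K where "K = {k. j < k \<and> k < n \<and> X k < Y k}"
  have "K \<noteq> {}"
  proof
    assume "K = {}"
    then have "0 \<le> (\<Sum>i\<in>{Suc j..<n}. X i - Y i)" unfolding K_def by (intro sum_nonneg) force
    moreover have "(\<Sum>i<n. X i - Y i) = 0" using tot by (simp add: sum_subtractf)
    ultimately show False using split[of j n "\<lambda>i. X i - Y i"] gap j by simp
  qed
  define k where "k = Min K"
  have k: "j < k" "k < n" "X k < Y k" and k_first: "\<And>i. j < i \<Longrightarrow> i < n \<Longrightarrow> X i < Y i \<Longrightarrow> k \<le> i"
    using Min_in[of K] \<open>K \<noteq> {}\<close> unfolding k_def K_def by auto
  have mid: "X i = Y i" if "j < i" "i < k" for i
    using j_last[of i] k_first[of i] that k by force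
  show thesis
  proof (rule that[OF k(1,2) j(2) k(3) mid])
    fix m assume "j < m" "m \<le> k"
    then have "(\<Sum>i\<in>{Suc j..<m}. X i - Y i) = 0" using mid by (intro sum.neutral) auto
    then show "X j - Y j \<le> (\<Sum>i<m. X i) - (\<Sum>i<m. Y i)"
      using split[of j m "\<lambda>i. X i - Y i"] gap \<open>j < m\<close> by (simp add: sum_subtractf)
  qed
qed

lemma sum_after_transfer:
  fixes X :: "nat \<Rightarrow> real"
  assumes "j \<noteq> k"
  shows "(\<Sum>i<m. (X(j := X j - \<delta>, k := X k + \<delta>)) i)
       = (\<Sum>i<m. X i) - (if j < m then \<delta> else 0) + (if k < m then \<delta> else 0)"
proof -
  have "(X(j := X j - \<delta>, k := X k + \<delta>)) i = X i - (if i = j then \<delta> else 0) + (if i = k then \<delta> else 0)" for i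
    using assms by simp
  then show ?thesis by (simp add: sum.distrib sum_subtractf)
qed

lemma transfer_chain:
  fixes \<Phi> :: "(nat \<Rightarrow> real) \<Rightarrow> real" and n :: nat
  assumes transfer: "\<And>x i j a b. \<forall>k<n. 0 \<le> x k \<and> x k \<le> 1 \<Longrightarrow> i < n \<Longrightarrow> j < n \<Longrightarrow> i \<noteq> j \<Longrightarrow>
      a + b = x i + x j \<Longrightarrow> x j \<le> b \<Longrightarrow> b \<le> a \<Longrightarrow> a \<le> x i \<Longrightarrow> \<Phi> x \<le> \<Phi> (x(i:=a, j:=b))"
    and cong: "\<And>x y. \<forall>k<n. x k = y k \<Longrightarrow> \<Phi> x = \<Phi> y"
    and boxX: "\<forall>k<n. 0 \<le> X k \<and> X k \<le> 1" and boxY: "\<forall>k<n. 0 \<le> Y k \<and> Y k \<le> 1"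
    and Y_antitone: "\<forall>i i'. i \<le> i' \<longrightarrow> i' < n \<longrightarrow> Y i' \<le> Y i"
    and pre: "\<forall>m\<le>n. (\<Sum>i<m. Y i) \<le> (\<Sum>i<m. X i)" and tot: "(\<Sum>i<n. X i) = (\<Sum>i<n. Y i)"
  shows "\<Phi> X \<le> \<Phi> Y"
  using boxX pre tot
proof (induction "card {k. k < n \<and> X k \<noteq> Y k}" arbitrary: X rule: less_induct)
  case (less X)
  show ?case
  proof (cases "\<forall>k<n. X k = Y k")
    case True then show ?thesis using cong[OF True] by simp
  next
    case False
    then obtain j k where jk: "j < k" "k < n" "Y j < X j" "X k < Y k"
      and mid: "\<And>i. j < i \<Longrightarrow> i < k \<Longrightarrow> X i = Y i"
      and gap: "\<And>m. j < m \<Longrightarrow> m \<le> k \<Longrightarrow> X j - Y j \<le> (\<Sum>i<m. X i) - (\<Sum>i<m. Y i)"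
      using crossing_indices[OF less.prems(2,3)] by blast
    define \<delta> where "\<delta> = min (X j - Y j) (Y k - X k)"
    define X' where "X' = X(j := X j - \<delta>, k := X k + \<delta>)"
    have "Y k \<le> Y j" using Y_antitone jk by auto
    then have bounds: "Y j \<le> X j - \<delta>" "X k + \<delta> \<le> Y k" "0 < \<delta>" "X k + \<delta> \<le> X j - \<delta>"
      unfolding \<delta>_def using jk by (auto simp: min_def)
    have "\<Phi> X \<le> \<Phi> X'"
      unfolding X'_def using bounds jk less.prems(1) by (intro transfer) auto
    moreover have "\<Phi> X' \<le> \<Phi> Y"
    proof (rule less.hyps)
      have "{m. m < n \<and> X' m \<noteq> Y m} \<subseteq> {m. m < n \<and> X m \<noteq> Y m} - (if X j - \<delta> = Y j then {j} else {k})"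
        unfolding X'_def \<delta>_def using jk by (auto split: if_splits)
      moreover have "j \<in> {m. m < n \<and> X m \<noteq> Y m}" "k \<in> {m. m < n \<and> X m \<noteq> Y m}" using jk by auto
      ultimately show "card {m. m < n \<and> X' m \<noteq> Y m} < card {m. m < n \<and> X m \<noteq> Y m}"
        by (intro psubset_card_mono) (auto split: if_splits)
      show "\<forall>m<n. 0 \<le> X' m \<and> X' m \<le> 1"
        using less.prems(1) boxY bounds jk unfolding X'_def by force
      show "\<forall>m\<le>n. (\<Sum>i<m. Y i) \<le> (\<Sum>i<m. X' i)"
        using less.prems(2) gap bounds jk unfolding X'_def sum_after_transfer[OF less_imp_neq[OF jk(1)]]
        by (smt (verit) \<delta>_def min.cobounded1 not_less)
      show "(\<Sum>i<n. X' i) = (\<Sum>i<n. Y i)"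
        using less.prems(3) jk unfolding X'_def sum_after_transfer[OF less_imp_neq[OF jk(1)]] by simp
    qed
    ultimately show ?thesis by linarith
  qed
qed

lemma sum_list_take_nth:
  fixes xs :: "real list"
  assumes "m \<le> length xs"
  shows "sum_list (take m xs) = (\<Sum>i<m. xs ! i)"
  using assms by (simp add: sum_list_sum_nth atLeast0LessThan min_def)

lemma sorted_coordinates:
  fixes x :: "nat \<Rightarrow> real" and n :: nat
  defines "xs \<equiv> rev (sort (map x [0..<n]))"
  shows "mset (map ((!) xs) [0..<n]) = mset (map x [0..<n])"
    and "\<forall>i i'. i \<le> i' \<longrightarrow> i' < n \<longrightarrow> xs ! i' \<le> xs ! i"
    and "\<And>i. i < n \<Longrightarrow> \<exists>k<n. xs ! i = x k"
    and "\<And>m. m \<le> n \<Longrightarrow> (\<Sum>i<m. xs ! i) = top_sum n x m"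
    and "(\<Sum>i<n. xs ! i) = (\<Sum>i<n. x i)"
proof -
  have len: "length xs = n" unfolding xs_def by simp
  then have map_nth: "map ((!) xs) [0..<n] = xs" by (metis map_nth)
  have ms: "mset xs = mset (map x [0..<n])" unfolding xs_def by simp
  show "mset (map ((!) xs) [0..<n]) = mset (map x [0..<n])" using map_nth ms by simp
  show "\<forall>i i'. i \<le> i' \<longrightarrow> i' < n \<longrightarrow> xs ! i' \<le> xs ! i"
  proof (intro allI impI)
    fix i i' :: nat assume ii: "i \<le> i'" "i' < n"
    define S where "S = sort (map x [0..<n])"
    have "sorted S" "length S = n" unfolding S_def by auto
    then show "xs ! i' \<le> xs ! i"
      using ii unfolding xs_def S_def[symmetric] by (auto simp: rev_nth sorted_iff_nth_mono)
  qed
  show "\<exists>k<n. xs ! i = x k" if "i < n" for i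
  proof -
    have "xs ! i \<in> set xs" using that len by simp
    also have "set xs = x ` {..<n}" using arg_cong[OF ms, of set_mset] by (simp add: atLeast0LessThan)
    finally show ?thesis by auto
  qed
  show "(\<Sum>i<m. xs ! i) = top_sum n x m" if "m \<le> n" for m
    unfolding top_sum_def xs_def[symmetric] using sum_list_take_nth[of m xs] len that by simp
  have "(\<Sum>i<n. xs ! i) = sum_list xs" using sum_list_take_nth[of n xs] len by simp
  also have "\<dots> = sum_list (map x [0..<n])" by (metis ms sum_mset_sum_list)
  also have "\<dots> = (\<Sum>i<n. x i)" by (simp add: interv_sum_list_conv_sum_set_nat atLeast0LessThan)
  finally show "(\<Sum>i<n. xs ! i) = (\<Sum>i<n. x i)" .
qed

lemma schur_concave_from_transfers:
  fixes \<Phi> :: "(nat \<Rightarrow> real) \<Rightarrow> real" and n :: nat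
  assumes transfer: "\<And>x i j a b. \<forall>k<n. 0 \<le> x k \<and> x k \<le> 1 \<Longrightarrow> i < n \<Longrightarrow> j < n \<Longrightarrow> i \<noteq> j \<Longrightarrow>
      a + b = x i + x j \<Longrightarrow> x j \<le> b \<Longrightarrow> b \<le> a \<Longrightarrow> a \<le> x i \<Longrightarrow> \<Phi> x \<le> \<Phi> (x(i:=a, j:=b))"
    and cong: "\<And>x y. \<forall>k<n. x k = y k \<Longrightarrow> \<Phi> x = \<Phi> y"
    and sym: "\<And>x y. mset (map x [0..<n]) = mset (map y [0..<n]) \<Longrightarrow> \<Phi> x = \<Phi> y"
  shows "schur_concave_on n {p. \<forall>i<n. 0 \<le> p i \<and> p i \<le> 1} \<Phi>"
  unfolding schur_concave_on_def
proof (intro ballI impI)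
  fix x y assume x: "x \<in> {p. \<forall>i<n. 0 \<le> p i \<and> p i \<le> 1}" and y: "y \<in> {p. \<forall>i<n. 0 \<le> p i \<and> p i \<le> 1}"
    and maj: "majorizes n x y"
  define xs ys where "xs = rev (sort (map x [0..<n]))" and "ys = rev (sort (map y [0..<n]))"
  note X = sorted_coordinates[where x=x and n=n, folded xs_def] and Y = sorted_coordinates[where x=y and n=n, folded ys_def]
  have "\<Phi> ((!) xs) \<le> \<Phi> ((!) ys)"
  proof (rule transfer_chain[where \<Phi>=\<Phi> and n=n, OF transfer cong])
    show "\<forall>k<n. 0 \<le> xs ! k \<and> xs ! k \<le> 1" using X(3) x by force
    show "\<forall>k<n. 0 \<le> ys ! k \<and> ys ! k \<le> 1" using Y(3) y by force
    show "\<forall>i i'. i \<le> i' \<longrightarrow> i' < n \<longrightarrow> ys ! i' \<le> ys ! i" using Y(2) .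
    show "\<forall>m\<le>n. (\<Sum>i<m. ys ! i) \<le> (\<Sum>i<m. xs ! i)"
      using maj X(4) Y(4) unfolding majorizes_def by auto
    show "(\<Sum>i<n. xs ! i) = (\<Sum>i<n. ys ! i)"
      using maj X(5) Y(5) unfolding majorizes_def by auto
  qed auto
  moreover have "\<Phi> x = \<Phi> ((!) xs)" "\<Phi> y = \<Phi> ((!) ys)"
    using sym X(1) Y(1) by metis+
  ultimately show "\<Phi> x \<le> \<Phi> y" by simp
qed

text \<open>Every vector majorizes the constant vector with the same mean: the k largest coordinates
  have average at least the overall average.\<close>

lemma top_sum_ge_mean:
  fixes x :: "nat \<Rightarrow> real" and n k :: nat
  assumes "k \<le> n"
  shows "real k * ((\<Sum>i<n. x i) / real n) \<le> top_sum n x k"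
proof (cases "k = 0")
  case False
  define xs where "xs = rev (sort (map x [0..<n]))"
  note X = sorted_coordinates[where x=x and n=n, folded xs_def]
  define v where "v = xs ! (k - 1)"
  have top: "real k * v \<le> (\<Sum>i<k. xs ! i)"
    using sum_mono[of "{..<k}" "\<lambda>_. v" "(!) xs"] X(2) assms False unfolding v_def by force
  have rest: "(\<Sum>i\<in>{k..<n}. xs ! i) \<le> real (n - k) * v"
    using sum_mono[of "{k..<n}" "(!) xs" "\<lambda>_. v"] X(2) False unfolding v_def by force
  have split: "(\<Sum>i<n. xs ! i) = (\<Sum>i<k. xs ! i) + (\<Sum>i\<in>{k..<n}. xs ! i)"
    using sum.atLeastLessThan_concat[of 0 k n "(!) xs"] assms by (simp add: atLeast0LessThan)
  have "real k * (\<Sum>i<n. xs ! i) \<le> real k * (\<Sum>i<k. xs ! i) + real (n - k) * (real k * v)"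
    using split mult_left_mono[OF rest, of "real k"] by (simp add: algebra_simps)
  also have "\<dots> \<le> real n * (\<Sum>i<k. xs ! i)"
    using mult_left_mono[OF top, of "real (n - k)"] assms by (simp add: of_nat_diff algebra_simps)
  finally show ?thesis
    using X(4)[OF assms] X(5) assms False by (simp add: field_simps)
qed (simp add: top_sum_def)

lemma top_sum_const:
  assumes "k \<le> n"
  shows "top_sum n (\<lambda>_. c) k = real k * c"
  using assms by (simp add: top_sum_def map_replicate_const sum_list_replicate)

lemma majorizes_mean:
  assumes "0 < n"
  shows "majorizes n x (\<lambda>_. (\<Sum>i<n. x i) / real n)"
  unfolding majorizes_def using top_sum_ge_mean top_sum_const assms by simp

lemma rate_fun_schur_concave:
  assumes "0 < \<rho>" "\<rho> \<le> 1"
  shows "schur_concave_on n {p. \<forall>i<n. 0 \<le> p i \<and> p i \<le> 1} (rate_fun n \<rho>)"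
  by (rule schur_concave_from_transfers) (auto intro: rate_fun_transfer[OF assms] rate_fun_cong rate_fun_mset)

lemma sinr_density_single_beam:
  fixes \<rho> :: real
  assumes "0 < \<rho>"
  shows "(\<lambda>x. ennreal (sinr_density 1 \<rho> x)) = (\<lambda>x. ennreal (exponential_density (1/\<rho>) x))"
proof
  fix x :: real
  show "ennreal (sinr_density 1 \<rho> x) = ennreal (exponential_density (1/\<rho>) x)"
  proof (cases "x < 0")
    case False
    then have "sinr_density 1 \<rho> x = exp (-x/\<rho>) / \<rho>" by (simp add: sinr_density_def)
    then show ?thesis using False by (simp add: exponential_density_def)
  qed (simp add: sinr_density_def exponential_density_def)
qed

text \<open>Tail of the single-beam SINR; the atom at c is null, so \<le> and < give the same value.\<close>

lemma sinr_tail: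
  fixes P :: "'a measure" and \<rho> c :: real
  assumes P: "prob_space P" and r: "0 < \<rho>" and c: "0 \<le> c"
    and dist: "distributed P lborel g (\<lambda>x. ennreal (sinr_density 1 \<rho> x))"
  shows "measure P {\<omega>\<in>space P. c < g \<omega>} = exp (-c/\<rho>)"
    and "measure P {\<omega>\<in>space P. c \<le> g \<omega>} = exp (-c/\<rho>)"
proof -
  interpret prob_space P by (rule P)
  have distE: "distributed P lborel g (exponential_density (1/\<rho>))"
    using dist unfolding sinr_density_single_beam[OF r] .
  have [measurable]: "g \<in> borel_measurable P" using distributed_measurable[OF dist] by simp
  show gt: "prob {\<omega>\<in>space P. c < g \<omega>} = exp (-c/\<rho>)"
    using exponential_distributedD_gt[OF distE c] r by simp
  have "emeasure P (g -` {c} \<inter> space P) = (\<integral>\<^sup>+x. ennreal (sinr_density 1 \<rho> x) * indicator {c} x \<partial>lborel)"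
    by (rule distributed_emeasure[OF dist]) simp
  also have "\<dots> = 0" by simp
  finally have atom: "prob {\<omega>\<in>space P. g \<omega> = c} = 0"
    by (simp add: emeasure_eq_measure vimage_def Int_def conj_commute)
  have "prob {\<omega>\<in>space P. c \<le> g \<omega>} \<le> prob {\<omega>\<in>space P. c < g \<omega>} + prob {\<omega>\<in>space P. g \<omega> = c}"
    by (rule order_trans[OF finite_measure_mono measure_Un_le]) auto
  moreover have "prob {\<omega>\<in>space P. c < g \<omega>} \<le> prob {\<omega>\<in>space P. c \<le> g \<omega>}"
    by (intro finite_measure_mono) auto
  ultimately show "prob {\<omega>\<in>space P. c \<le> g \<omega>} = exp (-c/\<rho>)" using gt atom by simp
qed

lemma sinr_thr_prob:
  fixes P :: "'a measure" and \<rho> p :: real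
  assumes P: "prob_space P" and r: "0 < \<rho>" and p: "0 \<le> p" "p \<le> 1"
    and dist: "distributed P lborel g (\<lambda>x. ennreal (sinr_density 1 \<rho> x))"
  shows "0 \<le> sinr_thr 1 \<rho> p" and "measure P {\<omega>\<in>space P. sinr_thr 1 \<rho> p \<le> ereal (g \<omega>)} = p"
proof -
  have "0 \<le> sinr_thr 1 \<rho> p \<and> measure P {\<omega>\<in>space P. sinr_thr 1 \<rho> p \<le> ereal (g \<omega>)} = p"
  proof (cases "p = 0")
    case True
    then show ?thesis by (simp add: sinr_thr_def)
  next
    case False
    then have p0: "0 < p" using p by simp
    define x0 where "x0 = - \<rho> * ln p"
    have x0: "0 \<le> x0" "exp (-x0/\<rho>) = p" unfolding x0_def using p0 p r by (auto simp: mult_le_0_iff)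
    have "(THE x. 0 \<le> x \<and> sinr_cdf 1 \<rho> x = 1 - p) = x0"
    proof (rule the_equality)
      show "0 \<le> x0 \<and> sinr_cdf 1 \<rho> x0 = 1 - p" using x0 by (simp add: sinr_cdf_def)
      fix x assume "0 \<le> x \<and> sinr_cdf 1 \<rho> x = 1 - p"
      then have "-x/\<rho> = ln p" using p0 by (auto simp: sinr_cdf_def)
      then show "x = x0" unfolding x0_def using r by (simp add: field_simps)
    qed
    then have "sinr_thr 1 \<rho> p = ereal x0" unfolding sinr_thr_def using False by simp
    then show ?thesis using sinr_tail(2)[OF P r x0(1) dist] x0 by simp
  qed
  then show "0 \<le> sinr_thr 1 \<rho> p" "measure P {\<omega>\<in>space P. sinr_thr 1 \<rho> p \<le> ereal (g \<omega>)} = p" by auto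
qed

text \<open>The truncated SINR exceeds t \<ge> 0 iff the user feeds back and its SINR exceeds t; since one
  of the two events contains the other, the probability is a minimum.\<close>

lemma prob_trunc_exceed:
  fixes P :: "'a measure" and g :: "'a \<Rightarrow> real" and \<tau> :: ereal and t :: real
  assumes P: "prob_space P" and [measurable]: "g \<in> borel_measurable P" and t: "0 \<le> t"
  shows "measure P {\<omega>\<in>space P. t < trunc_sinr (g \<omega>) \<tau>}
       = min (measure P {\<omega>\<in>space P. \<tau> \<le> ereal (g \<omega>)}) (measure P {\<omega>\<in>space P. t < g \<omega>})"
proof -
  interpret prob_space P by (rule P)
  have exceed: "{\<omega>\<in>space P. t < trunc_sinr (g \<omega>) \<tau>} = {\<omega>\<in>space P. \<tau> \<le> ereal (g \<omega>) \<and> t < g \<omega>}"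
    using t unfolding trunc_sinr_def by auto
  show ?thesis
  proof (cases "\<tau> \<le> ereal t")
    case True
    then have eq: "{\<omega>\<in>space P. \<tau> \<le> ereal (g \<omega>) \<and> t < g \<omega>} = {\<omega>\<in>space P. t < g \<omega>}"
      by (auto intro: order_trans[of \<tau> "ereal t"])
    have "prob {\<omega>\<in>space P. t < g \<omega>} \<le> prob {\<omega>\<in>space P. \<tau> \<le> ereal (g \<omega>)}"
      using eq by (intro finite_measure_mono) (blast, measurable)
    then show ?thesis unfolding exceed eq by (simp add: min_def)
  next
    case False
    have sub: "{\<omega>\<in>space P. \<tau> \<le> ereal (g \<omega>)} \<subseteq> {\<omega>\<in>space P. t < g \<omega>}"
    proof clarify
      fix \<omega> assume "\<tau> \<le> ereal (g \<omega>)"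
      have "ereal t < \<tau>" using False by (simp add: not_le)
      also note \<open>\<tau> \<le> ereal (g \<omega>)\<close>
      finally show "t < g \<omega>" by simp
    qed
    then have "{\<omega>\<in>space P. \<tau> \<le> ereal (g \<omega>) \<and> t < g \<omega>} = {\<omega>\<in>space P. \<tau> \<le> ereal (g \<omega>)}" by auto
    moreover have "prob {\<omega>\<in>space P. \<tau> \<le> ereal (g \<omega>)} \<le> prob {\<omega>\<in>space P. t < g \<omega>}"
      using sub by (intro finite_measure_mono) (blast, measurable)
    ultimately show ?thesis unfolding exceed by (simp add: min_def)
  qed
qed

lemma prob_Max_exceed:
  fixes P :: "'a measure" and gam :: "'i \<Rightarrow> 'a \<Rightarrow> real" and h :: "'i \<Rightarrow> real \<Rightarrow> real"
  assumes P: "prob_space P" and ind: "prob_space.indep_vars P (\<lambda>_. borel) gam I"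
    and I: "finite I" "I \<noteq> {}" and h: "\<And>i. i \<in> I \<Longrightarrow> h i \<in> borel_measurable borel"
  shows "measure P {\<omega>\<in>space P. t < Max ((\<lambda>i. h i (gam i \<omega>)) ` I)}
       = 1 - (\<Prod>i\<in>I. 1 - measure P {\<omega>\<in>space P. t < h i (gam i \<omega>)})"
proof -
  interpret prob_space P by (rule P)
  define A where "A i = {\<omega>\<in>space P. h i (gam i \<omega>) \<le> t}" for i
  have T_meas: "(\<lambda>\<omega>. h i (gam i \<omega>)) \<in> borel_measurable P" if "i \<in> I" for i
    using ind h[OF that] that unfolding indep_vars_def by (auto intro: measurable_compose)
  have A_gen: "A i \<in> {gam i -` B \<inter> space P | B. B \<in> sets borel}" if "i \<in> I" for i
  proof -
    have "{x. h i x \<le> t} \<in> sets borel" using h[OF that] by measurable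
    moreover have "A i = gam i -` {x. h i x \<le> t} \<inter> space P" unfolding A_def by auto
    ultimately show ?thesis by blast
  qed
  have "indep_sets (\<lambda>i. {gam i -` B \<inter> space P | B. B \<in> sets borel}) I"
    using ind unfolding indep_vars_def2 by simp
  then have "prob (\<Inter>i\<in>I. A i) = (\<Prod>i\<in>I. prob (A i))"
    using A_gen I by (intro indep_setsD) auto
  moreover have "(\<Inter>i\<in>I. A i) = space P - {\<omega>\<in>space P. t < Max ((\<lambda>i. h i (gam i \<omega>)) ` I)}"
  proof -
    have "(\<Inter>i\<in>I. A i) = {\<omega>\<in>space P. \<forall>i\<in>I. h i (gam i \<omega>) \<le> t}"
      using I unfolding A_def by auto
    also have "\<dots> = {\<omega>\<in>space P. Max ((\<lambda>i. h i (gam i \<omega>)) ` I) \<le> t}"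
      using I by simp
    finally show ?thesis by (auto simp: not_less)
  qed
  moreover have "A i = space P - {\<omega>\<in>space P. t < h i (gam i \<omega>)}" for i
    unfolding A_def by auto
  moreover have "{\<omega>\<in>space P. t < h i (gam i \<omega>)} \<in> events" if "i \<in> I" for i
    using T_meas[OF that] by measurable
  moreover have "{\<omega>\<in>space P. t < Max ((\<lambda>i. h i (gam i \<omega>)) ` I)} \<in> events"
  proof -
    have "(\<lambda>\<omega>. Max ((\<lambda>i. h i (gam i \<omega>)) ` I)) \<in> borel_measurable P"
      using I T_meas by (intro borel_measurable_Max) auto
    then show ?thesis by measurable
  qed
  ultimately show ?thesis by (simp add: prob_compl cong: prod.cong)
qed

lemma ln_one_plus_as_nn_integral:
  fixes y :: real
  assumes "0 \<le> y"
  shows "ennreal (ln (1 + y)) = (\<integral>\<^sup>+t. ennreal (1/(1+t)) * indicator {0<..<y} t \<partial>lborel)"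
proof -
  have "(\<integral>\<^sup>+t. ennreal (1/(1+t)) * indicator {0..y} t \<partial>lborel) = ennreal (ln (1 + y) - ln (1 + 0))"
    using assms by (intro nn_integral_FTC_Icc) (auto intro!: derivative_eq_intros simp: field_simps)
  also have "(\<integral>\<^sup>+t. ennreal (1/(1+t)) * indicator {0..y} t \<partial>lborel)
           = (\<integral>\<^sup>+t. ennreal (1/(1+t)) * indicator {0<..<y} t \<partial>lborel)"
  proof (rule nn_integral_cong_AE)
    have "AE t in lborel. t \<noteq> 0" "AE t in lborel. t \<noteq> y" by (rule AE_lborel_singleton)+
    then show "AE t in lborel. ennreal (1/(1+t)) * indicator {0..y} t = ennreal (1/(1+t)) * indicator {0<..<y} t"
      by eventually_elim (auto split: split_indicator)
  qed
  finally show ?thesis by simp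
qed

lemma nn_integral_ln_one_plus:
  fixes P :: "'a measure" and Y :: "'a \<Rightarrow> real"
  assumes P: "sigma_finite_measure P" and [measurable]: "Y \<in> borel_measurable P" and Y0: "\<And>\<omega>. 0 \<le> Y \<omega>"
  shows "(\<integral>\<^sup>+\<omega>. ennreal (ln (1 + Y \<omega>)) \<partial>P)
       = (\<integral>\<^sup>+t. indicator {0<..} t * ennreal (1/(1+t)) * emeasure P {\<omega>\<in>space P. t < Y \<omega>} \<partial>lborel)"
proof -
  define f where "f t \<omega> = (if 0 < t \<and> t < Y \<omega> then ennreal (1/(1+t)) else 0)" for t \<omega>
  have "(\<integral>\<^sup>+\<omega>. ennreal (ln (1 + Y \<omega>)) \<partial>P) = (\<integral>\<^sup>+\<omega>. (\<integral>\<^sup>+t. f t \<omega> \<partial>lborel) \<partial>P)"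
    unfolding ln_one_plus_as_nn_integral[OF Y0] f_def
    by (intro nn_integral_cong) (auto split: split_indicator)
  also have "\<dots> = (\<integral>\<^sup>+t. (\<integral>\<^sup>+\<omega>. f t \<omega> \<partial>P) \<partial>lborel)"
  proof -
    have fm: "case_prod f \<in> borel_measurable (lborel \<Otimes>\<^sub>M P)" unfolding f_def by measurable
    have "pair_sigma_finite lborel P"
      by (simp add: pair_sigma_finite_def lborel.sigma_finite_measure_axioms P)
    from pair_sigma_finite.Fubini'[OF this fm] show ?thesis by simp
  qed
  also have "\<dots> = (\<integral>\<^sup>+t. indicator {0<..} t * ennreal (1/(1+t)) * emeasure P {\<omega>\<in>space P. t < Y \<omega>} \<partial>lborel)"
  proof (rule nn_integral_cong)
    fix t :: real
    have "(\<integral>\<^sup>+\<omega>. f t \<omega> \<partial>P)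
        = (\<integral>\<^sup>+\<omega>. (indicator {0<..} t * ennreal (1/(1+t))) * indicator {\<omega>\<in>space P. t < Y \<omega>} \<omega> \<partial>P)"
      unfolding f_def by (intro nn_integral_cong) (auto split: split_indicator)
    also have "\<dots> = indicator {0<..} t * ennreal (1/(1+t)) * emeasure P {\<omega>\<in>space P. t < Y \<omega>}"
      by (rule nn_integral_cmult_indicator) measurable
    finally show "(\<integral>\<^sup>+\<omega>. f t \<omega> \<partial>P) = indicator {0<..} t * ennreal (1/(1+t)) * emeasure P {\<omega>\<in>space P. t < Y \<omega>}" .
  qed
  finally show ?thesis .
qed

lemma rate_fun_as_nn_integral:
  fixes \<rho> :: real
  assumes r: "0 < \<rho>" and box: "\<forall>i<n. 0 \<le> p i \<and> p i \<le> 1"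
  shows "rate_fun n \<rho> p = enn2real (\<integral>\<^sup>+t. ennreal (indicator {0<..} t * (exceed_fun n \<rho> p t / (1+t))) \<partial>lborel)"
  unfolding rate_fun_def set_lebesgue_integral_def
proof (simp only: real_scaleR_def, rule integral_eq_nn_integral)
  show "(\<lambda>t. indicator {0<..} t * (exceed_fun n \<rho> p t / (1+t))) \<in> borel_measurable lborel"
    using rate_integrand_integrable[OF r box]
    unfolding set_integrable_def real_scaleR_def by (rule borel_measurable_integrable)
  show "AE t in lborel. 0 \<le> indicator {0<..} t * (exceed_fun n \<rho> p t / (1+t))"
    using exceed_fun_bounds[OF box] by (auto intro!: AE_I2 split: split_indicator)
qed

lemma prob_max_trunc_exceed:
  fixes P :: "'a measure" and gam :: "nat \<Rightarrow> 'a \<Rightarrow> real" and \<tau> :: "nat \<Rightarrow> ereal"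
  assumes P: "prob_space P" and n: "1 \<le> n" and r: "0 < \<rho>" and t: "0 < t"
    and ind: "prob_space.indep_vars P (\<lambda>_. borel) gam {..<n}"
    and dist: "\<And>i. i < n \<Longrightarrow> distributed P lborel (gam i) (\<lambda>x. ennreal (sinr_density 1 \<rho> x))"
  shows "measure P {\<omega>\<in>space P. t < Max ((\<lambda>i. trunc_sinr (gam i \<omega>) (\<tau> i)) ` {..<n})}
       = exceed_fun n \<rho> (\<lambda>i. measure P {\<omega>\<in>space P. \<tau> i \<le> ereal (gam i \<omega>)}) t"
proof -
  have I: "finite {..<n}" "{..<n} \<noteq> {}" using n by (auto simp: lessThan_empty_iff)
  have trunc_meas: "(\<lambda>x. trunc_sinr x (\<tau> i)) \<in> borel_measurable borel" for i
    unfolding trunc_sinr_def by measurable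
  have gam_meas: "gam i \<in> borel_measurable P" if "i < n" for i
    using distributed_measurable[OF dist[OF that]] by simp
  show ?thesis
    unfolding exceed_fun_def
    using prob_Max_exceed[OF P ind I trunc_meas] prob_trunc_exceed[OF P gam_meas, of _ t]
      sinr_tail(1)[OF P r _ dist, of t] t by simp
qed

lemma sum_rate_eq_rate_fun:
  fixes P :: "'a measure" and gam :: "nat \<Rightarrow> 'a \<Rightarrow> real" and \<tau> :: "nat \<Rightarrow> ereal"
  assumes P: "prob_space P" and n: "1 \<le> n" and r: "0 < \<rho>"
    and ind: "prob_space.indep_vars P (\<lambda>_. borel) gam {..<n}"
    and dist: "\<And>i. i < n \<Longrightarrow> distributed P lborel (gam i) (\<lambda>x. ennreal (sinr_density 1 \<rho> x))"
    and tau: "\<forall>i<n. 0 \<le> \<tau> i"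
  shows "sum_rate1 P n gam \<tau> = rate_fun n \<rho> (\<lambda>i. measure P {\<omega>\<in>space P. \<tau> i \<le> ereal (gam i \<omega>)})"
proof -
  interpret prob_space P by (rule P)
  define pe where "pe i = measure P {\<omega>\<in>space P. \<tau> i \<le> ereal (gam i \<omega>)}" for i
  define Y where "Y \<omega> = Max ((\<lambda>i. trunc_sinr (gam i \<omega>) (\<tau> i)) ` {..<n})" for \<omega>
  have T_meas: "(\<lambda>\<omega>. trunc_sinr (gam i \<omega>) (\<tau> i)) \<in> borel_measurable P" if "i < n" for i
  proof -
    have [measurable]: "gam i \<in> borel_measurable P"
      using distributed_measurable[OF dist[OF that]] by simp
    show ?thesis unfolding trunc_sinr_def by measurable
  qed
  have Y_meas: "Y \<in> borel_measurable P"
    unfolding Y_def by (rule borel_measurable_Max) (simp_all add: T_meas)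
  have Y0: "0 \<le> Y \<omega>" for \<omega>
  proof -
    have "0 \<le> trunc_sinr (gam 0 \<omega>) (\<tau> 0)"
    proof (cases "\<tau> 0 \<le> ereal (gam 0 \<omega>)")
      case True
      have "0 \<le> \<tau> 0" using tau n by simp
      then have "0 \<le> ereal (gam 0 \<omega>)" using True by (rule order_trans)
      then show ?thesis using True by (simp add: trunc_sinr_def)
    qed (simp add: trunc_sinr_def)
    also have "\<dots> \<le> Y \<omega>" unfolding Y_def using n by (intro Max_ge) auto
    finally show ?thesis .
  qed
  have pe01: "\<forall>i<n. 0 \<le> pe i \<and> pe i \<le> 1" unfolding pe_def by simp
  have "sum_rate1 P n gam \<tau> = enn2real (\<integral>\<^sup>+\<omega>. ennreal (ln (1 + Y \<omega>)) \<partial>P)"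
    unfolding sum_rate1_def Y_def[symmetric] using Y0 Y_meas
    by (intro integral_eq_nn_integral) (auto intro!: AE_I2)
  also have "\<dots> = enn2real (\<integral>\<^sup>+t. ennreal (indicator {0<..} t * (exceed_fun n \<rho> pe t / (1+t))) \<partial>lborel)"
    unfolding nn_integral_ln_one_plus[OF prob_space_imp_sigma_finite[OF P] Y_meas Y0]
    using prob_max_trunc_exceed[OF P n r _ ind dist] exceed_fun_bounds[OF pe01]
    unfolding Y_def pe_def
    by (intro arg_cong[where f=enn2real] nn_integral_cong)
       (auto simp: emeasure_eq_measure ennreal_mult[symmetric] split: split_indicator)
  also have "\<dots> = rate_fun n \<rho> pe"
    using rate_fun_as_nn_integral[OF r pe01] by simp
  finally show ?thesis unfolding pe_def .
qed

lemma sum_rate_thr_eq_rate_fun: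
  fixes P :: "'a measure" and gam :: "nat \<Rightarrow> 'a \<Rightarrow> real"
  assumes P: "prob_space P" and n: "1 \<le> n" and r: "0 < \<rho>"
    and ind: "prob_space.indep_vars P (\<lambda>_. borel) gam {..<n}"
    and dist: "\<And>i. i < n \<Longrightarrow> distributed P lborel (gam i) (\<lambda>x. ennreal (sinr_density 1 \<rho> x))"
    and p: "\<forall>i<n. 0 \<le> p i \<and> p i \<le> 1"
  shows "sum_rate1 P n gam (\<lambda>i. sinr_thr 1 \<rho> (p i)) = rate_fun n \<rho> p"
proof -
  have "sum_rate1 P n gam (\<lambda>i. sinr_thr 1 \<rho> (p i))
      = rate_fun n \<rho> (\<lambda>i. measure P {\<omega>\<in>space P. sinr_thr 1 \<rho> (p i) \<le> ereal (gam i \<omega>)})"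
    using sinr_thr_prob(1)[OF P r _ _ dist] p by (intro sum_rate_eq_rate_fun[OF P n r ind dist]) auto
  also have "\<dots> = rate_fun n \<rho> p"
    using sinr_thr_prob(2)[OF P r _ _ dist] p by (intro rate_fun_cong) auto
  finally show ?thesis .
qed

text \<open>Replacing every threshold by the one realising the average feedback probability keeps the
  expected feedback load and, by Schur-concavity, does not decrease the sum rate.\<close>

lemma homogeneous_threshold_dominates:
  fixes P :: "'a measure" and gam :: "nat \<Rightarrow> 'a \<Rightarrow> real" and \<tau> :: "nat \<Rightarrow> ereal"
  assumes P: "prob_space P" and n: "1 \<le> n" and r: "0 < \<rho>" "\<rho> \<le> 1"
    and ind: "prob_space.indep_vars P (\<lambda>_. borel) gam {..<n}"
    and dist: "\<And>i. i < n \<Longrightarrow> distributed P lborel (gam i) (\<lambda>x. ennreal (sinr_density 1 \<rho> x))"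
    and tau: "\<forall>i<n. 0 \<le> \<tau> i"
  obtains t :: ereal where "0 \<le> t"
    "(\<Sum>i<n. measure P {\<omega>\<in>space P. t \<le> ereal (gam i \<omega>)}) = (\<Sum>i<n. measure P {\<omega>\<in>space P. \<tau> i \<le> ereal (gam i \<omega>)})"
    "sum_rate1 P n gam \<tau> \<le> sum_rate1 P n gam (\<lambda>_. t)"
proof -
  define pe where "pe i = measure P {\<omega>\<in>space P. \<tau> i \<le> ereal (gam i \<omega>)}" for i
  define m where "m = (\<Sum>i<n. pe i) / real n"
  have pe01: "\<forall>i<n. 0 \<le> pe i \<and> pe i \<le> 1" unfolding pe_def by (simp add: prob_space.prob_le_1[OF P])
  have m01: "0 \<le> m" "m \<le> 1"
    using sum_mono[of "{..<n}" pe "\<lambda>_. 1"] pe01 n unfolding m_def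
    by (auto simp: divide_le_eq intro!: sum_nonneg divide_nonneg_nonneg)
  define t where "t = sinr_thr 1 \<rho> m"
  have t_prob: "measure P {\<omega>\<in>space P. t \<le> ereal (gam i \<omega>)} = m" if "i < n" for i
    unfolding t_def using sinr_thr_prob(2)[OF P r(1) m01 dist[OF that]] .
  show thesis
  proof
    show "0 \<le> t" unfolding t_def using sinr_thr_prob(1)[OF P r(1) m01 dist] n by auto
    show "(\<Sum>i<n. measure P {\<omega>\<in>space P. t \<le> ereal (gam i \<omega>)})
        = (\<Sum>i<n. measure P {\<omega>\<in>space P. \<tau> i \<le> ereal (gam i \<omega>)})"
      using t_prob n unfolding m_def pe_def by simp
    have "rate_fun n \<rho> pe \<le> rate_fun n \<rho> (\<lambda>_. m)"
      using rate_fun_schur_concave[OF r, of n] majorizes_mean[of n pe] pe01 m01 n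
      unfolding schur_concave_on_def m_def by auto
    then show "sum_rate1 P n gam \<tau> \<le> sum_rate1 P n gam (\<lambda>_. t)"
      using sum_rate_thr_eq_rate_fun[OF P n r(1) ind dist, of "\<lambda>_. m"] m01
        sum_rate_eq_rate_fun[OF P n r(1) ind dist tau]
      unfolding t_def pe_def by simp
  qed
qed

lemma sum_rate_schur_concave:
  fixes P :: "'a measure" and gam :: "nat \<Rightarrow> 'a \<Rightarrow> real"
  assumes P: "prob_space P" and n: "1 \<le> n" and r: "0 < \<rho>" "\<rho> \<le> 1"
    and ind: "prob_space.indep_vars P (\<lambda>_. borel) gam {..<n}"
    and dist: "\<And>i. i < n \<Longrightarrow> distributed P lborel (gam i) (\<lambda>x. ennreal (sinr_density 1 \<rho> x))"
  shows "schur_concave_on n {p. \<forall>i<n. 0 \<le> p i \<and> p i \<le> 1}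
           (\<lambda>p. sum_rate1 P n gam (\<lambda>i. sinr_thr 1 \<rho> (p i)))"
  unfolding schur_concave_on_def
proof (intro ballI impI)
  fix x y assume x: "x \<in> {p. \<forall>i<n. 0 \<le> p i \<and> p i \<le> 1}" and y: "y \<in> {p. \<forall>i<n. 0 \<le> p i \<and> p i \<le> 1}"
    and "majorizes n x y"
  then have "rate_fun n \<rho> x \<le> rate_fun n \<rho> y"
    using rate_fun_schur_concave[OF r, of n] unfolding schur_concave_on_def by blast
  then show "sum_rate1 P n gam (\<lambda>i. sinr_thr 1 \<rho> (x i)) \<le> sum_rate1 P n gam (\<lambda>i. sinr_thr 1 \<rho> (y i))"
    using sum_rate_thr_eq_rate_fun[OF P n r(1) ind dist] x y by simp
qed

theorem theorem2:
  fixes P :: "'a measure" and n :: nat and \<rho> :: real and gam :: "nat \<Rightarrow> 'a \<Rightarrow> real"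
  assumes "prob_space P"
    and "n \<ge> 2"
    and "0 < \<rho>" and "\<rho> \<le> 1"
    and "prob_space.indep_vars P (\<lambda>_. borel) gam {..<n}"
    and "\<And>i. i < n \<Longrightarrow> distributed P lborel (gam i) (\<lambda>x. ennreal (sinr_density 1 \<rho> x))"
  shows "schur_concave_on n {p. \<forall>i<n. 0 \<le> p i \<and> p i \<le> 1}
           (\<lambda>p. sum_rate1 P n gam (\<lambda>i. sinr_thr 1 \<rho> (p i)))
       \<and> (\<forall>lam\<in>{0<..real n}. \<forall>\<tau> :: nat \<Rightarrow> ereal.
            (\<forall>i<n. 0 \<le> \<tau> i) \<and>
            (\<Sum>i<n. measure P {\<omega>\<in>space P. \<tau> i \<le> ereal (gam i \<omega>)}) \<le> lam \<longrightarrow>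
            (\<exists>t :: ereal. 0 \<le> t \<and>
               (\<Sum>i<n. measure P {\<omega>\<in>space P. t \<le> ereal (gam i \<omega>)}) \<le> lam \<and>
               sum_rate1 P n gam \<tau> \<le> sum_rate1 P n gam (\<lambda>_. t)))"
proof -
  have n: "1 \<le> n" using assms(2) by simp
  have "\<exists>t :: ereal. 0 \<le> t \<and>
      (\<Sum>i<n. measure P {\<omega>\<in>space P. t \<le> ereal (gam i \<omega>)}) \<le> lam \<and>
      sum_rate1 P n gam \<tau> \<le> sum_rate1 P n gam (\<lambda>_. t)"
    if tau: "\<forall>i<n. 0 \<le> \<tau> i"
      and load: "(\<Sum>i<n. measure P {\<omega>\<in>space P. \<tau> i \<le> ereal (gam i \<omega>)}) \<le> lam" for \<tau> lam
  proof -
    obtain t :: ereal where "0 \<le> t"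
      "(\<Sum>i<n. measure P {\<omega>\<in>space P. t \<le> ereal (gam i \<omega>)})
        = (\<Sum>i<n. measure P {\<omega>\<in>space P. \<tau> i \<le> ereal (gam i \<omega>)})"
      "sum_rate1 P n gam \<tau> \<le> sum_rate1 P n gam (\<lambda>_. t)"
      by (rule homogeneous_threshold_dominates[OF assms(1) n assms(3,4,5,6) tau])
    with load show ?thesis by (intro exI[of _ t]) simp
  qed
  then show ?thesis using sum_rate_schur_concave[OF assms(1) n assms(3,4,5,6)] by simp
qed

end
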